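(* Let $M$ and $k$ be fixed nonnegative integers. Let $\phi(x_1,\dots,x_n)$ be a term of $\mathcal{L}_{\mathrm{Ab}}$ with $n$ variables and depth $l\le k$. Assume $a_1,\dots,a_n\in[-2^M,2^M]$. Then $$f_{\tau(\phi)}(r_{M,k}(a_1),\dots,r_{M,k}(a_n))=r_{M,k}(f_\phi(a_1,\dots,a_n)),$$ and moreover $r_{M,k}(f_\phi(a_1,\dots,a_n))\in\left[\tfrac12-\tfrac{1}{2^{k-l+1}},\tfrac12+\tfrac{1}{2^{k-l+1}}\right]$.
   Context: $\mathcal{L}_{\mathrm{Ab}}=\langle +,-,0,\wedge,\vee\rangle$ is the language of abelian lattice-ordered groups; for an $\mathcal{L}_{\mathrm{Ab}}$-term $\phi$ in variables $x_1,\dots,x_n$, $f_\phi:\mathbb{R}^n\to\mathbb{R}$ is its term function in the ordered additive group of reals ($+$, unary $-$, $0$, $\wedge=\min$, $\vee=\max$). $\mathcal{L}_{\mathrm{MV}[\frac12]}=\langle\oplus,\otimes,\neg,\to,0,1,\tfrac12,\wedge,\vee\rangle$ is interpreted in $[0,1]_{\text{\L}}[\tfrac12]$: domain $[0,1]$, $\neg a=1-a$, $a\otimes b=\max(0,a+b-1)$, $a\oplus b=\min(1,a+b)$, $a\to b=\min(1,1-a+b)$, $\wedge=\min$, $\vee=\max$, constants $0,1,\tfrac12$ interpreted as themselves; $f_\psi:[0,1]^n\to[0,1]$ denotes the term function of an $\mathcal{L}_{\mathrm{MV}[\frac12]}$-term $\psi$. Depth: variables and constants have depth $0$, $\mathrm{depth}(-\phi)=\mathrm{depth}(\phi)+1$,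 and $\mathrm{depth}(\phi\circ\psi)=\max(\mathrm{depth}(\phi),\mathrm{depth}(\psi))+1$ for $\circ\in\{+,\wedge,\vee\}$. The translation $\tau$ from $\mathcal{L}_{\mathrm{Ab}}$-terms to $\mathcal{L}_{\mathrm{MV}[\frac12]}$-terms is defined recursively: $\tau(x)=x$ for variables $x$; $\tau(0)=\tfrac12$; $\tau(-\phi)=\neg\tau(\phi)$; $\tau(\phi+\psi)=(\tau(\phi)\oplus\tau(\psi))\otimes(\tfrac12\oplus(\tau(\phi)\otimes\tau(\psi)))$; $\tau(\phi\vee\psi)=\tau(\phi)\vee\tau(\psi)$; $\tau(\phi\wedge\psi)=\tau(\phi)\wedge\tau(\psi)$. For nonnegative integers $M,k$, $r_{M,k}:\mathbb{R}\to\mathbb{R}$ is $r_{M,k}(a)=\frac{a}{2^{M+k+1}}+\frac12$. *)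

theory Defs
  imports Complex_Main
begin

datatype ab_term = AVar nat | AZero | ANeg ab_term | AAdd ab_term ab_term
  | AMeet ab_term ab_term | AJoin ab_term ab_term

datatype mv_term = MVar nat | MZero | MOne | MHalf | MNeg mv_term
  | MOplus mv_term mv_term | MOtimes mv_term mv_term | MImp mv_term mv_term
  | MMeet mv_term mv_term | MJoin mv_term mv_term

fun ab_vars :: "ab_term \<Rightarrow> nat set" where
  "ab_vars (AVar i) = {i}"
| "ab_vars AZero = {}"
| "ab_vars (ANeg p) = ab_vars p"
| "ab_vars (AAdd p q) = ab_vars p \<union> ab_vars q"
| "ab_vars (AMeet p q) = ab_vars p \<union> ab_vars q"
| "ab_vars (AJoin p q) = ab_vars p \<union> ab_vars q"

fun depth :: "ab_term \<Rightarrow> nat" where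
  "depth (AVar i) = 0"
| "depth AZero = 0"
| "depth (ANeg p) = depth p + 1"
| "depth (AAdd p q) = max (depth p) (depth q) + 1"
| "depth (AMeet p q) = max (depth p) (depth q) + 1"
| "depth (AJoin p q) = max (depth p) (depth q) + 1"

text \<open>Term function in the ordered additive group of reals; variable x_(i+1) is AVar i.\<close>
fun ab_eval :: "ab_term \<Rightarrow> (nat \<Rightarrow> real) \<Rightarrow> real" where
  "ab_eval (AVar i) a = a i"
| "ab_eval AZero a = 0"
| "ab_eval (ANeg p) a = - ab_eval p a"
| "ab_eval (AAdd p q) a = ab_eval p a + ab_eval q a"
| "ab_eval (AMeet p q) a = min (ab_eval p a) (ab_eval q a)"
| "ab_eval (AJoin p q) a = max (ab_eval p a) (ab_eval q a)"

fun mv_eval :: "mv_term \<Rightarrow> (nat \<Rightarrow> real) \<Rightarrow> real" where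
  "mv_eval (MVar i) a = a i"
| "mv_eval MZero a = 0"
| "mv_eval MOne a = 1"
| "mv_eval MHalf a = 1/2"
| "mv_eval (MNeg p) a = 1 - mv_eval p a"
| "mv_eval (MOplus p q) a = min 1 (mv_eval p a + mv_eval q a)"
| "mv_eval (MOtimes p q) a = max 0 (mv_eval p a + mv_eval q a - 1)"
| "mv_eval (MImp p q) a = min 1 (1 - mv_eval p a + mv_eval q a)"
| "mv_eval (MMeet p q) a = min (mv_eval p a) (mv_eval q a)"
| "mv_eval (MJoin p q) a = max (mv_eval p a) (mv_eval q a)"

fun tau :: "ab_term \<Rightarrow> mv_term" where
  "tau (AVar i) = MVar i"
| "tau AZero = MHalf"
| "tau (ANeg p) = MNeg (tau p)"
| "tau (AAdd p q) = MOtimes (MOplus (tau p) (tau q)) (MOplus MHalf (MOtimes (tau p) (tau q)))"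
| "tau (AJoin p q) = MJoin (tau p) (tau q)"
| "tau (AMeet p q) = MMeet (tau p) (tau q)"

definition r :: "nat \<Rightarrow> nat \<Rightarrow> real \<Rightarrow> real" where
  "r M k a = a / 2 ^ (M + k + 1) + 1/2"

end

theory Submission
  imports Defs
begin

text \<open>The map \<open>x \<mapsto> x / c + 1/2\<close>, which is \<open>r M k\<close> for \<open>c = 2 ^ (M + k + 1)\<close>, is
  increasing, so it commutes with \<open>min\<close> and \<open>max\<close>, and it carries group negation to \<open>\<not>\<close>.
  For the translation of \<open>+\<close>, let \<open>s\<close> be the sum of the two arguments: since
  \<open>min 1 s + max 0 (s - 1) = s\<close>, the term \<open>(x \<oplus> y) \<otimes> (1/2 \<oplus> (x \<otimes> y))\<close> evaluates to \<open>s - 1/2\<close>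
  as soon as \<open>1/2 \<le> s \<le> 3/2\<close>, and \<open>s - 1/2\<close> is the image of the group sum.
  A term of depth \<open>d\<close> has absolute value at most \<open>2 ^ d\<close> times the bound on its inputs.
  With inputs in \<open>[-2^M, 2^M]\<close> and depth at most \<open>k\<close>, every summand is therefore bounded
  by \<open>2 ^ (M + k - 1)\<close>, so its image lies within \<open>1/4\<close> of \<open>1/2\<close>; the same estimate gives
  the interval of the second claim.\<close>

lemma abs_add_abs_le_two_pow_max:
  fixes x y B :: real
  assumes "0 \<le> B" "\<bar>x\<bar> \<le> 2 ^ m * B" "\<bar>y\<bar> \<le> 2 ^ n * B"
  shows "\<bar>x\<bar> + \<bar>y\<bar> \<le> 2 ^ (max m n + 1) * B"
proof -
  have "2 ^ m * B \<le> 2 ^ max m n * B" "2 ^ n * B \<le> 2 ^ max m n * B"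
    by (simp_all add: assms(1) mult_right_mono)
  then show ?thesis using assms(2,3) by simp
qed

lemma abs_ab_eval_le:
  fixes B :: real
  assumes "0 \<le> B" "\<forall>i\<in>ab_vars \<phi>. \<bar>a i\<bar> \<le> B"
  shows "\<bar>ab_eval \<phi> a\<bar> \<le> 2 ^ depth \<phi> * B"
  using assms(2)
proof (induction \<phi>)
  case (AAdd p q)
  then have "\<bar>ab_eval p a\<bar> + \<bar>ab_eval q a\<bar> \<le> 2 ^ depth (AAdd p q) * B"
    using abs_add_abs_le_two_pow_max[OF assms(1)] by simp
  then show ?case using abs_triangle_ineq by simp
next
  case (AMeet p q)
  then have "\<bar>ab_eval p a\<bar> + \<bar>ab_eval q a\<bar> \<le> 2 ^ depth (AMeet p q) * B"
    using abs_add_abs_le_two_pow_max[OF assms(1)] by simp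
  then show ?case unfolding ab_eval.simps by linarith
next
  case (AJoin p q)
  then have "\<bar>ab_eval p a\<bar> + \<bar>ab_eval q a\<bar> \<le> 2 ^ depth (AJoin p q) * B"
    using abs_add_abs_le_two_pow_max[OF assms(1)] by simp
  then show ?case unfolding ab_eval.simps by linarith
qed (use assms(1) in simp_all)

lemma mv_eval_tau_AAdd:
  assumes "1/2 \<le> mv_eval (tau p) e + mv_eval (tau q) e"
    and "mv_eval (tau p) e + mv_eval (tau q) e \<le> 3/2"
  shows "mv_eval (tau (AAdd p q)) e = mv_eval (tau p) e + mv_eval (tau q) e - 1/2"
  using assms by (simp add: min_def max_def)

lemma mv_eval_tau_scaled:
  fixes B c :: real
  assumes "0 \<le> B" "0 < c" "2 ^ (d + 1) * B \<le> c"
    and "\<forall>i\<in>ab_vars \<phi>. \<bar>a i\<bar> \<le> B" "depth \<phi> \<le> d"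
  shows "mv_eval (tau \<phi>) (\<lambda>i. a i / c + 1/2) = ab_eval \<phi> a / c + 1/2"
proof -
  have scale_mono: "mono (\<lambda>x. x / c + 1/2)"
    using assms(2) by (simp add: mono_def divide_right_mono)
  have quarter: "4 * (2 ^ m * B) \<le> c" if "m + 1 \<le> d" for m
  proof -
    have "4 * (2 ^ m * B) = 2 ^ (m + 2) * B" by simp
    also have "\<dots> \<le> 2 ^ (d + 1) * B"
      by (rule mult_right_mono[OF power_increasing]) (use that assms(1) in auto)
    finally show ?thesis using assms(3) by linarith
  qed
  from assms(4,5) show ?thesis
  proof (induction \<phi>)
    case (AAdd p q)
    let ?e = "\<lambda>i. a i / c + 1/2"
    have IH: "mv_eval (tau p) ?e = ab_eval p a / c + 1/2"
      "mv_eval (tau q) ?e = ab_eval q a / c + 1/2"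
      using AAdd by simp_all
    have "\<bar>ab_eval p a\<bar> \<le> 2 ^ depth p * B" "\<bar>ab_eval q a\<bar> \<le> 2 ^ depth q * B"
      using AAdd.prems(1) abs_ab_eval_le[OF assms(1)] by simp_all
    moreover have "4 * (2 ^ depth p * B) \<le> c" "4 * (2 ^ depth q * B) \<le> c"
      using AAdd.prems(2) quarter by simp_all
    ultimately have small: "\<bar>ab_eval p a / c\<bar> \<le> 1/4" "\<bar>ab_eval q a / c\<bar> \<le> 1/4"
      using assms(2) by (simp_all add: abs_divide divide_le_eq)
    have "mv_eval (tau (AAdd p q)) ?e = mv_eval (tau p) ?e + mv_eval (tau q) ?e - 1/2"
      by (rule mv_eval_tau_AAdd) (use small IH in linarith)+
    also have "\<dots> = ab_eval (AAdd p q) a / c + 1/2"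
      by (simp add: IH add_divide_distrib)
    finally show ?case .
  next
    case (ANeg p)
    then show ?case by (simp add: field_simps)
  qed (simp_all add: min_of_mono[OF scale_mono] max_of_mono[OF scale_mono])
qed

theorem mainTheorem4:
  fixes M k n l :: nat and \<phi> :: ab_term and a :: "nat \<Rightarrow> real"
  assumes "ab_vars \<phi> \<subseteq> {..<n}"
    and "depth \<phi> = l" and "l \<le> k"
    and "\<forall>i<n. a i \<in> {- (2 ^ M) .. 2 ^ M}"
  shows "mv_eval (tau \<phi>) (\<lambda>i. r M k (a i)) = r M k (ab_eval \<phi> a)
    \<and> r M k (ab_eval \<phi> a) \<in> {1/2 - 1 / 2 ^ (k - l + 1) .. 1/2 + 1 / 2 ^ (k - l + 1)}"
proof -
  have inputs: "\<forall>i\<in>ab_vars \<phi>. \<bar>a i\<bar> \<le> 2 ^ M"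
    using assms(1,4) by (auto simp: abs_le_iff)
  have exact: "mv_eval (tau \<phi>) (\<lambda>i. r M k (a i)) = r M k (ab_eval \<phi> a)"
    unfolding r_def
    by (rule mv_eval_tau_scaled[where B = "2 ^ M" and d = k])
      (use inputs assms(2,3) in \<open>simp_all add: power_add\<close>)
  have "\<bar>ab_eval \<phi> a\<bar> \<le> 2 ^ l * 2 ^ M"
    using abs_ab_eval_le[OF _ inputs] assms(2) by simp
  moreover have "(2::real) ^ (M + k + 1) = 2 ^ l * 2 ^ M * 2 ^ (k - l + 1)"
    using assms(3) by (simp flip: power_add)
  ultimately have "\<bar>ab_eval \<phi> a / 2 ^ (M + k + 1)\<bar> \<le> 1 / 2 ^ (k - l + 1)"
    by (simp add: abs_divide divide_le_eq)
  then show ?thesis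
    using exact unfolding r_def atLeastAtMost_iff abs_le_iff by (intro conjI) linarith+
qed

end
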